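(* Let $A, M, F \in \mathbb{C}^{n\times n}$ with $M$ and $F$ nonsingular, and let $I$ be the $n\times n$ identity matrix. Suppose $A$ is an $\mathsf H$-matrix and \[ \langle M\rangle - |M - A| = \langle A\rangle, \qquad \langle F\rangle - |F - A| = \langle A\rangle. \] Then \[ \rho\left(\left| I - F^{-1}(M + F - A) M^{-1} A \right|\right) < 1. \]
   Context: For a matrix $\mathcal A$, $|\mathcal A|$ denotes the entrywise absolute value (modulus) and $\rho(\mathcal A)$ its spectral radius. Comparisons between matrices are entrywise. A square real matrix $\mathcal A$ is an $\mathsf M$-matrix if there exists $\alpha\in\mathbb R$ with $\alpha I - \mathcal A \ge 0$ (entrywise) and $\alpha > \rho(\alpha I - \mathcal A)$. The comparison matrix $\langle \mathcal A\rangle$ of a square matrix $\mathcal A$ is defined by $\langle \mathcal A\rangle_{i,i} := |\mathcal A_{i,i}|$ and $\langle \mathcal A\rangle_{i,j} := -|\mathcal A_{i,j}|$ for $i\ne j$. A square matrix $\mathcal A$ is an $\mathsf H$-matrix if its comparison matrix $\langle\mathcal A\rangle$ is an $\mathsf M$-matrix. *)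

theory Defs
  imports "Jordan_Normal_Form.Spectral_Radius" "Jordan_Normal_Form.Gauss_Jordan_Elimination"
begin

definition cabs_mat :: "complex mat \<Rightarrow> real mat" where
  "cabs_mat A = map_mat cmod A"

definition comparison_mat :: "complex mat \<Rightarrow> real mat" where
  "comparison_mat A = mat (dim_row A) (dim_col A)
     (\<lambda>(i,j). if i = j then cmod (A $$ (i,j)) else - cmod (A $$ (i,j)))"

definition rho_real :: "real mat \<Rightarrow> real" where
  "rho_real B = spectral_radius (map_mat complex_of_real B)"

definition nonneg_mat :: "real mat \<Rightarrow> bool" where
  "nonneg_mat B \<longleftrightarrow> (\<forall>i < dim_row B. \<forall>j < dim_col B. 0 \<le> B $$ (i,j))"

definition M_matrix :: "real mat \<Rightarrow> bool" where
  "M_matrix B \<longleftrightarrow> square_mat B \<and>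
     (\<exists>\<alpha>::real. nonneg_mat (\<alpha> \<cdot>\<^sub>m 1\<^sub>m (dim_row B) - B) \<and>
                 \<alpha> > rho_real (\<alpha> \<cdot>\<^sub>m 1\<^sub>m (dim_row B) - B))"

definition H_matrix :: "complex mat \<Rightarrow> bool" where
  "H_matrix A \<longleftrightarrow> M_matrix (comparison_mat A)"

end

theory Submission
  imports Defs
begin

(* Since <A> is an M-matrix, a truncated Neumann series gives u > 0 with <A> u > 0. In the
   weighted max-norm |x|_u = max_j |x_j| / u_j each factor T = I - M^-1 A is a contraction:
   M (T x) = (M - A) x, and comparing both sides in a row i where |(T x)_i| / u_i is maximal
   gives |T x|_u <= c |x|_u with c = max_i (|M - A| u)_i / (<M> u)_i, which is < 1 because
   <M> u = |M - A| u + <A> u. The matrix of the theorem equals (I - F^-1 A) (I - M^-1 A), so it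
   contracts with factor c_F c_M < 1. Testing a contraction P on x_j = u_j conj (sgn P_ij) gives
   |P| u <= c u, and such a positive vector bounds every eigenvalue of |P| by c. *)

lemma mult_mat_vec_index_sum:
  assumes "A \<in> carrier_mat m n" "v \<in> carrier_vec n" "i < m"
  shows "(A *\<^sub>v v) $ i = (\<Sum>j<n. A $$ (i,j) * v $ j)"
  using assms by (auto simp: scalar_prod_def lessThan_atLeast0 intro!: sum.cong)

lemma times_mat_index_sum:
  assumes "A \<in> carrier_mat m n" "B \<in> carrier_mat n p" "i < m" "j < p"
  shows "(A * B) $$ (i,j) = (\<Sum>l<n. A $$ (i,l) * B $$ (l,j))"
  using assms by (auto simp: scalar_prod_def lessThan_atLeast0 intro!: sum.cong)

lemma pow_mat_Suc_left:
  fixes A :: "'a :: semiring_1 mat"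
  assumes A: "A \<in> carrier_mat n n"
  shows "A ^\<^sub>m Suc k = A * A ^\<^sub>m k"
proof (induction k)
  case (Suc k)
  have "A ^\<^sub>m Suc (Suc k) = (A * A ^\<^sub>m k) * A" using Suc by simp
  also have "\<dots> = A * (A ^\<^sub>m k * A)" using A by (intro assoc_mult_mat) auto
  finally show ?case by simp
qed (use A in simp)

lemma pow_mat_smult:
  fixes A :: "'a :: comm_ring_1 mat"
  assumes A: "A \<in> carrier_mat n n"
  shows "(a \<cdot>\<^sub>m A) ^\<^sub>m k = a ^ k \<cdot>\<^sub>m A ^\<^sub>m k"
proof (induction k)
  case (Suc k)
  have "(a \<cdot>\<^sub>m A) ^\<^sub>m Suc k = (a ^ k \<cdot>\<^sub>m A ^\<^sub>m k) * (a \<cdot>\<^sub>m A)" using Suc by simp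
  also have "\<dots> = a ^ k \<cdot>\<^sub>m (a \<cdot>\<^sub>m (A ^\<^sub>m k * A))"
    using A by (simp add: mult_smult_assoc_mat[of _ n n] mult_smult_distrib[of _ n n A n])
      (auto intro!: eq_matI)
  finally show ?case
    using A by (auto intro!: eq_matI)
qed (use A in \<open>auto intro!: eq_matI\<close>)

lemma pow_mat_nonneg:
  fixes C :: "real mat"
  assumes C: "C \<in> carrier_mat n n" and nonneg: "\<And>i j. i < n \<Longrightarrow> j < n \<Longrightarrow> 0 \<le> C $$ (i,j)"
    and "i < n" "j < n"
  shows "0 \<le> (C ^\<^sub>m k) $$ (i,j)"
  using assms(3,4)
proof (induction k arbitrary: j)
  case (Suc k)
  then show ?case
    using times_mat_index_sum[OF pow_carrier_mat[OF C] C, of i j k] nonneg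
    by (auto intro!: sum_nonneg mult_nonneg_nonneg)
qed (use C in simp)

lemma mat_inverse_of_invertible:
  fixes A :: "'a :: field mat"
  assumes A: "A \<in> carrier_mat n n" and inv: "invertible_mat A"
  shows "the (mat_inverse A) \<in> carrier_mat n n" "A * the (mat_inverse A) = 1\<^sub>m n"
    "the (mat_inverse A) * A = 1\<^sub>m n"
proof -
  from inv obtain B where AB: "A * B = 1\<^sub>m n" and BA: "B * A = 1\<^sub>m (dim_row B)"
    using A unfolding invertible_mat_def inverts_mat_def by auto
  have B: "B \<in> carrier_mat n n"
    using AB BA A by (metis carrier_matD(1,2) carrier_matI index_mult_mat(2,3) index_one_mat(2,3))
  with AB BA A have "A \<in> Units (ring_mat TYPE('a) n ())"
    unfolding Units_def ring_mat_def by auto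
  then obtain C where C: "mat_inverse A = Some C"
    using mat_inverse(1)[OF A] by fastforce
  with mat_inverse(2)[OF A C] show "the (mat_inverse A) \<in> carrier_mat n n"
    "A * the (mat_inverse A) = 1\<^sub>m n" "the (mat_inverse A) * A = 1\<^sub>m n" by auto
qed

lemma mult_one_minus_right_inverse:
  fixes M X A :: "'a :: comm_ring_1 mat"
  assumes M: "M \<in> carrier_mat n n" and X: "X \<in> carrier_mat n n" and A: "A \<in> carrier_mat n n"
    and MX: "M * X = 1\<^sub>m n"
  shows "M * (1\<^sub>m n - X * A) = M - A"
proof -
  have XA: "X * A \<in> carrier_mat n n" using X A by simp
  show ?thesis
    by (simp only: mult_minus_distrib_mat[OF M one_carrier_mat XA] right_mult_one_mat[OF M]
        assoc_mult_mat[OF M X A, symmetric] MX left_mult_one_mat[OF A])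
qed

lemma iteration_mat_factor:
  fixes A M F X Y :: "'a :: comm_ring_1 mat"
  assumes A: "A \<in> carrier_mat n n" and M: "M \<in> carrier_mat n n" and F: "F \<in> carrier_mat n n"
    and X: "X \<in> carrier_mat n n" and Y: "Y \<in> carrier_mat n n"
    and MX: "M * X = 1\<^sub>m n" and YF: "Y * F = 1\<^sub>m n"
  shows "1\<^sub>m n - Y * (M + F - A) * X * A = (1\<^sub>m n - Y * A) * (1\<^sub>m n - X * A)"
proof -
  have MF: "M + F \<in> carrier_mat n n" using M F by simp
  have YA: "Y * A \<in> carrier_mat n n" and XA: "X * A \<in> carrier_mat n n"
    and YAXA: "Y * (A * (X * A)) \<in> carrier_mat n n" using X Y A by auto
  have I_YA: "1\<^sub>m n - Y * A \<in> carrier_mat n n" by (rule minus_carrier_mat[OF YA])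
  have YM: "Y * M \<in> carrier_mat n n" using Y M by simp
  have YM_1: "Y * M + 1\<^sub>m n \<in> carrier_mat n n" using YM by simp
  have YS: "Y * (M + F - A) = Y * M + 1\<^sub>m n - Y * A"
    by (simp only: mult_minus_distrib_mat[OF Y MF A] mult_add_distrib_mat[OF Y M F] YF)
  have YSX: "(Y * M + 1\<^sub>m n - Y * A) * X = Y + X - Y * A * X"
    by (simp only: minus_mult_distrib_mat[OF YM_1 YA X] add_mult_distrib_mat[OF YM one_carrier_mat X]
        assoc_mult_mat[OF Y M X] MX right_mult_one_mat[OF Y] left_mult_one_mat[OF X])
  have YSXA: "(Y + X - Y * A * X) * A = Y * A + X * A - Y * (A * (X * A))"
    by (simp only: minus_mult_distrib_mat[OF add_carrier_mat[OF X] mult_carrier_mat[OF YA X] A]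
        add_mult_distrib_mat[OF Y X A] assoc_mult_mat[OF YA X A] assoc_mult_mat[OF Y A XA])
  have regroup: "a - (b + c - d) = a - b - (c - d)"
    if "a \<in> carrier_mat n n" "b \<in> carrier_mat n n" "c \<in> carrier_mat n n" "d \<in> carrier_mat n n"
    for a b c d :: "'a mat"
    using that by (intro eq_matI) auto
  have lhs: "1\<^sub>m n - Y * (M + F - A) * X * A = 1\<^sub>m n - Y * A - (X * A - Y * (A * (X * A)))"
    unfolding YS YSX YSXA by (rule regroup[OF one_carrier_mat YA XA YAXA])
  have rhs1: "X * A - Y * (A * (X * A)) = (1\<^sub>m n - Y * A) * (X * A)"
    using minus_mult_distrib_mat[OF one_carrier_mat YA XA] assoc_mult_mat[OF Y A XA] left_mult_one_mat[OF XA] by simp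
  have rhs2: "1\<^sub>m n - Y * A - (1\<^sub>m n - Y * A) * (X * A) = (1\<^sub>m n - Y * A) * (1\<^sub>m n - X * A)"
    using mult_minus_distrib_mat[OF I_YA one_carrier_mat XA] right_mult_one_mat[OF I_YA] by simp
  show ?thesis by (simp only: lhs rhs1 rhs2)
qed

lemma spectral_radius_nonneg:
  assumes "A \<in> carrier_mat n n" "n > 0"
  shows "0 \<le> spectral_radius A"
  using spectral_radius_mem_max(1)[OF assms] by auto

lemma spectral_radius_smult_le:
  fixes A :: "complex mat"
  assumes A: "A \<in> carrier_mat n n" and n: "n > 0" and a: "a \<noteq> 0"
  shows "spectral_radius (a \<cdot>\<^sub>m A) \<le> cmod a * spectral_radius A"
proof -
  have aA: "a \<cdot>\<^sub>m A \<in> carrier_mat n n" using A by simp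
  obtain \<mu> where "eigenvalue (a \<cdot>\<^sub>m A) \<mu>" and \<rho>: "spectral_radius (a \<cdot>\<^sub>m A) = cmod \<mu>"
    using spectral_radius_mem_max(1)[OF aA n] unfolding spectrum_def by auto
  then obtain v where v: "v \<in> carrier_vec n" "v \<noteq> 0\<^sub>v n" and Av: "(a \<cdot>\<^sub>m A) *\<^sub>v v = \<mu> \<cdot>\<^sub>v v"
    using aA unfolding eigenvalue_def eigenvector_def by auto
  have "A *\<^sub>v v = (\<mu> / a) \<cdot>\<^sub>v v"
  proof (rule eq_vecI)
    fix i assume "i < dim_vec ((\<mu> / a) \<cdot>\<^sub>v v)"
    then have i: "i < n" using v by simp
    have "a * (A *\<^sub>v v) $ i = \<mu> * v $ i"
      using arg_cong[OF Av, of "\<lambda>w. w $ i"] A v i by simp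
    then show "(A *\<^sub>v v) $ i = ((\<mu> / a) \<cdot>\<^sub>v v) $ i"
      using a i v by (simp add: field_simps)
  qed (use A v in simp)
  then have "eigenvalue A (\<mu> / a)"
    using A v unfolding eigenvalue_def eigenvector_def by auto
  then have "cmod (\<mu> / a) \<le> spectral_radius A"
    using spectral_radius_mem_max(2)[OF A n] unfolding spectrum_def by auto
  then show ?thesis
    using \<rho> a by (simp add: norm_divide divide_le_eq mult.commute)
qed

lemma pow_norm_bound_of_spectral_radius_less_1:
  fixes A :: "complex mat"
  assumes A: "A \<in> carrier_mat n n" and n: "n > 0" and \<rho>: "spectral_radius A < 1" and \<epsilon>: "\<epsilon> > 0"
  obtains N where "norm_bound (A ^\<^sub>m N) \<epsilon>"
proof -
  define r where "r = (spectral_radius A + 1) / 2"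
  have r: "0 < r" "r < 1" "spectral_radius A < r"
    using spectral_radius_nonneg[OF A n] \<rho> by (auto simp: r_def)
  define D where "D = complex_of_real (1 / r) \<cdot>\<^sub>m A"
  have D: "D \<in> carrier_mat n n" using A by (simp add: D_def)
  have "spectral_radius D \<le> (1 / r) * spectral_radius A"
    using spectral_radius_smult_le[OF A n, of "complex_of_real (1 / r)"] r by (simp add: D_def norm_divide)
  also have "\<dots> < 1" using r by (simp add: field_simps)
  finally obtain c where c: "\<And>k. norm_bound (D ^\<^sub>m k) c"
    using spectral_radius_jnf_norm_bound_less_1_upper_triangular[OF D] by auto
  obtain N where N: "r ^ N < \<epsilon> / (\<bar>c\<bar> + 1)"
    using real_arch_pow_inv[of "\<epsilon> / (\<bar>c\<bar> + 1)" r] r \<epsilon> by auto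
  have "norm_bound (A ^\<^sub>m N) \<epsilon>"
  proof
    fix i j assume "i < dim_row (A ^\<^sub>m N)" "j < dim_col (A ^\<^sub>m N)"
    then have ij: "i < n" "j < n" using A by (auto split: if_splits)
    have "(A ^\<^sub>m N) $$ (i,j) = complex_of_real (r ^ N) * (D ^\<^sub>m N) $$ (i,j)"
      using ij A r by (simp add: D_def pow_mat_smult field_simps)
    then have "norm ((A ^\<^sub>m N) $$ (i,j)) = r ^ N * norm ((D ^\<^sub>m N) $$ (i,j))"
      using r by (simp add: norm_mult norm_power)
    also have "\<dots> \<le> r ^ N * (\<bar>c\<bar> + 1)"
    proof -
      have "norm ((D ^\<^sub>m N) $$ (i,j)) \<le> c"
        using c[of N] ij D unfolding norm_bound_def by (simp split: if_splits)
      then show ?thesis using r by (intro mult_left_mono) auto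
    qed
    also have "\<dots> < \<epsilon>" using N by (simp add: field_simps)
    finally show "norm ((A ^\<^sub>m N) $$ (i,j)) \<le> \<epsilon>" by simp
  qed
  then show ?thesis by (rule that)
qed

lemma positive_vector_of_pow_row_sums_less_1:
  fixes C :: "real mat"
  assumes C: "C \<in> carrier_mat n n" and nonneg: "\<And>i j. i < n \<Longrightarrow> j < n \<Longrightarrow> 0 \<le> C $$ (i,j)"
    and small: "\<And>i. i < n \<Longrightarrow> (\<Sum>j<n. (C ^\<^sub>m N) $$ (i,j)) < 1"
  obtains u where "\<And>i. i < n \<Longrightarrow> 0 < u i" "\<And>i. i < n \<Longrightarrow> (\<Sum>j<n. C $$ (i,j) * u j) < u i"
proof -
  define w where "w k i = (\<Sum>j<n. (C ^\<^sub>m k) $$ (i,j))" for k i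
  define u where "u i = (\<Sum>k<N. w k i)" for i
  have w0: "w 0 i = 1" if "i < n" for i
    using that C by (simp add: w_def)
  have wS: "w (Suc k) i = (\<Sum>l<n. C $$ (i,l) * w k l)" if "i < n" for k i
  proof -
    have "w (Suc k) i = (\<Sum>j<n. \<Sum>l<n. C $$ (i,l) * (C ^\<^sub>m k) $$ (l,j))"
      unfolding w_def pow_mat_Suc_left[OF C]
      using that times_mat_index_sum[OF C pow_carrier_mat[OF C]] by (intro sum.cong) auto
    also have "\<dots> = (\<Sum>l<n. C $$ (i,l) * w k l)"
      unfolding w_def by (subst sum.swap) (simp add: sum_distrib_left)
    finally show ?thesis .
  qed
  show ?thesis
  proof
    fix i assume i: "i < n"
    have "N \<noteq> 0" using small[OF i] w0[OF i] unfolding w_def by (cases N) auto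
    then have "u i = w 0 i + (\<Sum>k\<in>{..<N} - {0}. w k i)"
      unfolding u_def by (simp add: sum.remove)
    moreover have "0 \<le> (\<Sum>k\<in>{..<N} - {0}. w k i)"
      unfolding w_def using pow_mat_nonneg[OF C nonneg i] by (intro sum_nonneg) auto
    ultimately show "0 < u i" using w0[OF i] by simp
    have "(\<Sum>l<n. C $$ (i,l) * u l) = (\<Sum>k<N. w (Suc k) i)"
      unfolding u_def wS[OF i] sum_distrib_left by (rule sum.swap)
    also have "\<dots> = u i - w 0 i + w N i"
      unfolding u_def by (induction N) auto
    also have "\<dots> < u i" using small[OF i] w0[OF i] by (simp add: w_def)
    finally show "(\<Sum>l<n. C $$ (i,l) * u l) < u i" .
  qed
qed

lemma pow_row_sums_less_1_of_spectral_radius_less_1: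
  fixes C :: "real mat"
  assumes C: "C \<in> carrier_mat n n" and n: "n > 0"
    and \<rho>: "spectral_radius (map_mat complex_of_real C) < 1"
  obtains N where "\<And>i. i < n \<Longrightarrow> (\<Sum>j<n. (C ^\<^sub>m N) $$ (i,j)) < 1"
proof -
  define Cc where "Cc = map_mat complex_of_real C"
  have Cc: "Cc \<in> carrier_mat n n" using C by (simp add: Cc_def)
  obtain N where N: "norm_bound (Cc ^\<^sub>m N) (1 / (real n + 1))"
  proof (rule pow_norm_bound_of_spectral_radius_less_1[OF Cc n \<rho>[folded Cc_def]])
    show "0 < 1 / (real n + 1)" by simp
  qed
  have "(\<Sum>j<n. (C ^\<^sub>m N) $$ (i,j)) < 1" if i: "i < n" for i
  proof -
    have "(C ^\<^sub>m N) $$ (i,j) \<le> 1 / (real n + 1)" if j: "j < n" for j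
    proof -
      have "Cc ^\<^sub>m N = map_mat complex_of_real (C ^\<^sub>m N)"
        unfolding Cc_def by (rule of_real_hom.mat_hom_pow[OF C, symmetric])
      then have "(Cc ^\<^sub>m N) $$ (i,j) = complex_of_real ((C ^\<^sub>m N) $$ (i,j))"
        using i j C by simp
      moreover have "norm ((Cc ^\<^sub>m N) $$ (i,j)) \<le> 1 / (real n + 1)"
        using N i j Cc unfolding norm_bound_def by (simp split: if_splits)
      ultimately show ?thesis by simp
    qed
    then have "(\<Sum>j<n. (C ^\<^sub>m N) $$ (i,j)) \<le> (\<Sum>j<n. 1 / (real n + 1))"
      by (intro sum_mono) simp
    also have "\<dots> = n * (1 / (real n + 1))" by simp
    also have "\<dots> < 1" by (simp add: field_simps)
    finally show ?thesis .
  qed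
  then show ?thesis by (rule that)
qed

lemma M_matrix_positive_vector:
  assumes K: "K \<in> carrier_mat n n" and n: "n > 0" and "M_matrix K"
  obtains u where "\<And>i. i < n \<Longrightarrow> 0 < u i" "\<And>i. i < n \<Longrightarrow> 0 < (\<Sum>j<n. K $$ (i,j) * u j)"
proof -
  define B where "B \<alpha> = \<alpha> \<cdot>\<^sub>m 1\<^sub>m n - K" for \<alpha>
  from \<open>M_matrix K\<close> K obtain \<alpha> where B_nonneg: "nonneg_mat (B \<alpha>)" and \<alpha>: "rho_real (B \<alpha>) < \<alpha>"
    unfolding M_matrix_def B_def by auto
  have B: "B \<alpha> \<in> carrier_mat n n" using K by (simp add: B_def minus_carrier_mat)
  have "0 < \<alpha>"
    using \<alpha> spectral_radius_nonneg[of "map_mat complex_of_real (B \<alpha>)" n] B n by (simp add: rho_real_def)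
  define C where "C = (1 / \<alpha>) \<cdot>\<^sub>m B \<alpha>"
  have C: "C \<in> carrier_mat n n" using B by (simp add: C_def)
  have C_nonneg: "0 \<le> C $$ (i,j)" if "i < n" "j < n" for i j
    using B_nonneg that B \<open>0 < \<alpha>\<close> by (simp add: C_def nonneg_mat_def)
  have "map_mat complex_of_real C = complex_of_real (1 / \<alpha>) \<cdot>\<^sub>m map_mat complex_of_real (B \<alpha>)"
    using B by (auto simp: C_def intro!: eq_matI)
  then have "spectral_radius (map_mat complex_of_real C) \<le> rho_real (B \<alpha>) / \<alpha>"
    using spectral_radius_smult_le[of "map_mat complex_of_real (B \<alpha>)" n "complex_of_real (1 / \<alpha>)"]
      B n \<open>0 < \<alpha>\<close> by (simp add: rho_real_def norm_divide)
  also have "\<dots> < 1" using \<alpha> \<open>0 < \<alpha>\<close> by simp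
  finally obtain N where "\<And>i. i < n \<Longrightarrow> (\<Sum>j<n. (C ^\<^sub>m N) $$ (i,j)) < 1"
    using pow_row_sums_less_1_of_spectral_radius_less_1[OF C n] by blast
  then obtain u where u: "\<And>i. i < n \<Longrightarrow> 0 < u i"
    and Cu: "\<And>i. i < n \<Longrightarrow> (\<Sum>j<n. C $$ (i,j) * u j) < u i"
    using positive_vector_of_pow_row_sums_less_1[OF C C_nonneg] by blast
  have "0 < (\<Sum>j<n. K $$ (i,j) * u j)" if i: "i < n" for i
  proof -
    have "(\<Sum>j<n. K $$ (i,j) * u j) = (\<Sum>j<n. \<alpha> * (if i = j then u j else 0) - \<alpha> * (C $$ (i,j) * u j))"
      using i K \<open>0 < \<alpha>\<close> by (intro sum.cong) (auto simp: C_def B_def algebra_simps)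
    also have "\<dots> = \<alpha> * (u i - (\<Sum>j<n. C $$ (i,j) * u j))"
      using i by (simp add: sum_subtractf right_diff_distrib flip: sum_distrib_left)
    finally show ?thesis using Cu[OF i] \<open>0 < \<alpha>\<close> by simp
  qed
  with u show ?thesis by (rule that)
qed

lemma mult_cnj_sgn: "z * cnj (sgn z) = complex_of_real (cmod z)"
proof (cases "z = 0")
  case False
  have "z * cnj z = complex_of_real (cmod z) * complex_of_real (cmod z)"
    by (simp add: complex_norm_square[symmetric] power2_eq_square)
  with False show ?thesis by (simp add: complex_sgn_def scaleR_conv_of_real field_simps)
qed simp

lemma ex_max_weighted_entry:
  fixes x :: "complex vec"
  assumes n: "n > 0" and u: "\<And>j. j < n \<Longrightarrow> 0 < u j"
  obtains i t where "i < n" "\<And>j. j < n \<Longrightarrow> cmod (x $ j) \<le> t * u j" "cmod (x $ i) = t * u i"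
proof -
  define f where "f j = cmod (x $ j) / u j" for j
  have "Max (f ` {..<n}) \<in> f ` {..<n}" using n by (intro Max_in) auto
  then obtain i where i: "i < n" "f i = Max (f ` {..<n})" by auto
  have le: "cmod (x $ j) \<le> f i * u j" if "j < n" for j
  proof -
    have "f j \<le> f i" using i that by simp
    then show ?thesis using u[OF that] by (simp add: f_def divide_le_eq)
  qed
  have eq: "cmod (x $ i) = f i * u i" using u[OF i(1)] by (simp add: f_def)
  show ?thesis using that[OF i(1) le eq] .
qed

lemma norm_sum_mult_le_weighted:
  fixes a x :: "'i \<Rightarrow> complex"
  assumes "\<And>j. j \<in> J \<Longrightarrow> cmod (x j) \<le> s * u j"
  shows "cmod (\<Sum>j\<in>J. a j * x j) \<le> s * (\<Sum>j\<in>J. cmod (a j) * u j)"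
proof -
  have "cmod (\<Sum>j\<in>J. a j * x j) \<le> (\<Sum>j\<in>J. cmod (a j) * cmod (x j))"
    using norm_sum[of "\<lambda>j. a j * x j" J] by (simp add: norm_mult)
  also have "\<dots> \<le> (\<Sum>j\<in>J. cmod (a j) * (s * u j))"
    using assms by (intro sum_mono mult_left_mono) auto
  finally show ?thesis by (simp add: sum_distrib_left algebra_simps)
qed

lemma comparison_mat_row_le_norm_mult_mat_vec:
  fixes M :: "complex mat"
  assumes M: "M \<in> carrier_mat n n" and y: "y \<in> carrier_vec n" and i: "i < n"
    and bound: "\<And>j. j < n \<Longrightarrow> cmod (y $ j) \<le> t * u j" and attained: "cmod (y $ i) = t * u i"
  shows "t * (\<Sum>j<n. comparison_mat M $$ (i,j) * u j) \<le> cmod ((M *\<^sub>v y) $ i)"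
proof -
  let ?off = "{..<n} - {i}"
  have "(M *\<^sub>v y) $ i = M $$ (i,i) * y $ i + (\<Sum>j\<in>?off. M $$ (i,j) * y $ j)"
    using i by (simp add: mult_mat_vec_index_sum[OF M y i] sum.remove)
  then have "cmod (M $$ (i,i)) * cmod (y $ i) - cmod (\<Sum>j\<in>?off. M $$ (i,j) * y $ j) \<le> cmod ((M *\<^sub>v y) $ i)"
    using norm_diff_ineq[of "M $$ (i,i) * y $ i"] by (simp add: norm_mult)
  moreover have "cmod (\<Sum>j\<in>?off. M $$ (i,j) * y $ j) \<le> t * (\<Sum>j\<in>?off. cmod (M $$ (i,j)) * u j)"
    using bound by (intro norm_sum_mult_le_weighted) auto
  moreover have "(\<Sum>j<n. comparison_mat M $$ (i,j) * u j) = cmod (M $$ (i,i)) * u i - (\<Sum>j\<in>?off. cmod (M $$ (i,j)) * u j)"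
    using i M by (simp add: sum.remove comparison_mat_def sum_negf)
  then have "t * (\<Sum>j<n. comparison_mat M $$ (i,j) * u j)
      = cmod (M $$ (i,i)) * cmod (y $ i) - t * (\<Sum>j\<in>?off. cmod (M $$ (i,j)) * u j)"
    by (simp add: attained right_diff_distrib mult.left_commute)
  ultimately show ?thesis by linarith
qed

definition weighted_contraction :: "nat \<Rightarrow> (nat \<Rightarrow> real) \<Rightarrow> real \<Rightarrow> complex mat \<Rightarrow> bool" where
  "weighted_contraction n u c T \<longleftrightarrow>
     (\<forall>x s. x \<in> carrier_vec n \<longrightarrow> (\<forall>j<n. cmod (x $ j) \<le> s * u j) \<longrightarrow>
        (\<forall>j<n. cmod ((T *\<^sub>v x) $ j) \<le> c * s * u j))"

lemma weighted_contraction_mult: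
  assumes S: "S \<in> carrier_mat n n" and T: "T \<in> carrier_mat n n"
    and "weighted_contraction n u a S" and "weighted_contraction n u b T"
  shows "weighted_contraction n u (a * b) (S * T)"
  unfolding weighted_contraction_def
proof (intro allI impI)
  fix x s j assume x: "x \<in> carrier_vec n" and bound: "\<forall>j<n. cmod (x $ j) \<le> s * u j" and j: "j < n"
  have Tx: "T *\<^sub>v x \<in> carrier_vec n" using T x by simp
  have "\<forall>j<n. cmod ((T *\<^sub>v x) $ j) \<le> (b * s) * u j"
    using assms(4) x bound unfolding weighted_contraction_def by (simp add: mult.assoc)
  then have "cmod ((S *\<^sub>v (T *\<^sub>v x)) $ j) \<le> a * (b * s) * u j"
    using assms(3) Tx j unfolding weighted_contraction_def by blast
  then show "cmod ((S * T *\<^sub>v x) $ j) \<le> a * b * s * u j"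
    using S T x by (simp add: assoc_mult_mat_vec mult.assoc)
qed

lemma splitting_contraction:
  fixes M A T :: "complex mat"
  assumes M: "M \<in> carrier_mat n n" and A: "A \<in> carrier_mat n n" and T: "T \<in> carrier_mat n n"
    and n: "n > 0" and MT: "M * T = M - A"
    and split: "comparison_mat M - cabs_mat (M - A) = comparison_mat A"
    and u: "\<And>i. i < n \<Longrightarrow> 0 < u i"
    and Au: "\<And>i. i < n \<Longrightarrow> 0 < (\<Sum>j<n. comparison_mat A $$ (i,j) * u j)"
  obtains c where "0 \<le> c" "c < 1" "weighted_contraction n u c T"
proof -
  define G where "G i = (\<Sum>j<n. comparison_mat M $$ (i,j) * u j)" for i
  define R where "R i = (\<Sum>j<n. cmod ((M - A) $$ (i,j)) * u j)" for i
  have R: "0 \<le> R i" for i using u unfolding R_def by (intro sum_nonneg) (simp add: less_imp_le)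
  have G: "G i = R i + (\<Sum>j<n. comparison_mat A $$ (i,j) * u j)" if i: "i < n" for i
  proof -
    have "comparison_mat M $$ (i,j) = cmod ((M - A) $$ (i,j)) + comparison_mat A $$ (i,j)" if "j < n" for j
      using arg_cong[OF split, of "\<lambda>B. B $$ (i,j)"] i that M A
      by (simp add: comparison_mat_def cabs_mat_def)
    then show ?thesis unfolding G_def R_def by (simp add: algebra_simps sum.distrib)
  qed
  have G_pos: "0 < G i" if "i < n" for i using G[OF that] R[of i] Au[OF that] by simp
  define c where "c = Max ((\<lambda>i. R i / G i) ` {..<n})"
  have c_ge: "R i / G i \<le> c" if "i < n" for i unfolding c_def using that by simp
  have "c \<in> (\<lambda>i. R i / G i) ` {..<n}" unfolding c_def using n by (intro Max_in) auto
  then obtain i0 where "i0 < n" "c = R i0 / G i0" by auto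
  then have "0 \<le> c" "c < 1" using R[of i0] G[of i0] G_pos[of i0] Au[of i0] by (auto simp: divide_less_eq)
  moreover have "weighted_contraction n u c T"
    unfolding weighted_contraction_def
  proof (intro allI impI)
    fix x s j assume x: "x \<in> carrier_vec n" and bound: "\<forall>j<n. cmod (x $ j) \<le> s * u j" and j: "j < n"
    have "0 \<le> s * u 0" using bound n norm_ge_zero order_trans by blast
    then have "0 \<le> s" using u[OF n] by (simp add: zero_le_mult_iff)
    define y where "y = T *\<^sub>v x"
    have y: "y \<in> carrier_vec n" using T x by (simp add: y_def)
    have My: "M *\<^sub>v y = (M - A) *\<^sub>v x"
      using M T x MT by (simp add: y_def assoc_mult_mat_vec[symmetric])
    obtain i t where i: "i < n" and y_le: "\<And>j. j < n \<Longrightarrow> cmod (y $ j) \<le> t * u j"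
      and y_i: "cmod (y $ i) = t * u i"
      by (rule ex_max_weighted_entry[of n u y]) (use n u in auto)
    have "t * G i \<le> cmod ((M *\<^sub>v y) $ i)"
      unfolding G_def by (rule comparison_mat_row_le_norm_mult_mat_vec[OF M y i y_le y_i])
    also have "\<dots> \<le> s * R i"
      unfolding My mult_mat_vec_index_sum[OF minus_carrier_mat[OF A] x i] R_def
      using bound by (intro norm_sum_mult_le_weighted) auto
    finally have "t \<le> s * (R i / G i)" using G_pos[OF i] by (simp add: le_divide_eq mult.commute)
    also have "\<dots> \<le> s * c" using c_ge[OF i] \<open>0 \<le> s\<close> by (rule mult_left_mono)
    finally have "t \<le> c * s" by (simp add: mult.commute)
    then show "cmod ((T *\<^sub>v x) $ j) \<le> c * s * u j"
      using y_le[OF j] u[OF j] unfolding y_def by (meson less_imp_le mult_right_mono order_trans)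
  qed
  ultimately show ?thesis by (rule that)
qed

lemma cabs_row_sum_le_of_weighted_contraction:
  fixes P :: "complex mat"
  assumes P: "P \<in> carrier_mat n n" and u: "\<And>j. j < n \<Longrightarrow> 0 \<le> u j" and i: "i < n"
    and contraction: "weighted_contraction n u c P"
  shows "(\<Sum>j<n. cmod (P $$ (i,j)) * u j) \<le> c * u i"
proof -
  define x where "x = vec n (\<lambda>j. complex_of_real (u j) * cnj (sgn (P $$ (i,j))))"
  have x: "x \<in> carrier_vec n" by (simp add: x_def)
  have "cmod (x $ j) \<le> 1 * u j" if "j < n" for j
    using that u[OF that] by (simp add: x_def norm_mult norm_sgn)
  then have "cmod ((P *\<^sub>v x) $ i) \<le> c * u i"
    using contraction x i unfolding weighted_contraction_def by fastforce
  moreover have "(P *\<^sub>v x) $ i = complex_of_real (\<Sum>j<n. cmod (P $$ (i,j)) * u j)"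
    unfolding mult_mat_vec_index_sum[OF P x i] of_real_sum
    by (intro sum.cong) (auto simp: x_def mult_cnj_sgn[symmetric] algebra_simps)
  moreover have "0 \<le> (\<Sum>j<n. cmod (P $$ (i,j)) * u j)" using u by (intro sum_nonneg) auto
  ultimately show ?thesis by (simp only: norm_of_real)
qed

lemma spectral_radius_le_weighted_row_sum:
  fixes Q :: "complex mat"
  assumes Q: "Q \<in> carrier_mat n n" and n: "n > 0" and u: "\<And>i. i < n \<Longrightarrow> 0 < u i"
    and rows: "\<And>i. i < n \<Longrightarrow> (\<Sum>j<n. cmod (Q $$ (i,j)) * u j) \<le> c * u i"
  shows "spectral_radius Q \<le> c"
proof -
  obtain ev where "eigenvalue Q ev" and \<rho>: "spectral_radius Q = cmod ev"
    using spectral_radius_mem_max(1)[OF Q n] unfolding spectrum_def by auto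
  then obtain v where v: "v \<in> carrier_vec n" "v \<noteq> 0\<^sub>v n" and Qv: "Q *\<^sub>v v = ev \<cdot>\<^sub>v v"
    using Q unfolding eigenvalue_def eigenvector_def by auto
  obtain i t where i: "i < n" and v_le: "\<And>j. j < n \<Longrightarrow> cmod (v $ j) \<le> t * u j"
    and v_i: "cmod (v $ i) = t * u i"
    by (rule ex_max_weighted_entry[of n u v]) (use n u in auto)
  obtain j where j: "j < n" "v $ j \<noteq> 0" using v by (metis eq_vecI carrier_vecD index_zero_vec)
  have "0 < t * u j" using v_le[OF j(1)] j(2) by (meson less_le_trans zero_less_norm_iff)
  then have "0 < t" using u[OF j(1)] by (simp add: zero_less_mult_iff)
  have "cmod ev * (t * u i) = cmod ((Q *\<^sub>v v) $ i)"
    using Qv i v v_i by (simp add: norm_mult)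
  also have "\<dots> \<le> t * (\<Sum>j<n. cmod (Q $$ (i,j)) * u j)"
    unfolding mult_mat_vec_index_sum[OF Q v(1) i] using v_le by (intro norm_sum_mult_le_weighted) auto
  also have "\<dots> \<le> c * (t * u i)" using rows[OF i] \<open>0 < t\<close> by (simp add: mult_left_mono mult.left_commute)
  finally show ?thesis using \<rho> \<open>0 < t\<close> u[OF i] by (simp add: mult_le_cancel_right_pos)
qed

lemma rho_real_cabs_le_of_weighted_contraction:
  fixes P :: "complex mat"
  assumes P: "P \<in> carrier_mat n n" and n: "n > 0" and u: "\<And>i. i < n \<Longrightarrow> 0 < u i"
    and "weighted_contraction n u c P"
  shows "rho_real (cabs_mat P) \<le> c"
  unfolding rho_real_def
proof (rule spectral_radius_le_weighted_row_sum[OF _ n u])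
  show "map_mat complex_of_real (cabs_mat P) \<in> carrier_mat n n" using P by (simp add: cabs_mat_def)
  fix i assume i: "i < n"
  have "(\<Sum>j<n. cmod (P $$ (i,j)) * u j) \<le> c * u i"
    using cabs_row_sum_le_of_weighted_contraction[OF P _ i assms(4)] u by (simp add: less_imp_le)
  then show "(\<Sum>j<n. cmod (map_mat complex_of_real (cabs_mat P) $$ (i,j)) * u j) \<le> c * u i"
    using P i by (simp add: cabs_mat_def)
qed

theorem corollary1:
  fixes A M F :: "complex mat" and n :: nat
  assumes "n > 0"
    and "A \<in> carrier_mat n n" and "M \<in> carrier_mat n n" and "F \<in> carrier_mat n n"
    and "invertible_mat M" and "invertible_mat F"
    and "H_matrix A"
    and "comparison_mat M - cabs_mat (M - A) = comparison_mat A"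
    and "comparison_mat F - cabs_mat (F - A) = comparison_mat A"
  shows "rho_real (cabs_mat (1\<^sub>m n - the (mat_inverse F) * (M + F - A) * the (mat_inverse M) * A)) < 1"
proof -
  note n = assms(1) and A = assms(2) and M = assms(3) and F = assms(4)
  obtain u where u: "\<And>i. i < n \<Longrightarrow> 0 < u i"
    and Au: "\<And>i. i < n \<Longrightarrow> 0 < (\<Sum>j<n. comparison_mat A $$ (i,j) * u j)"
    using M_matrix_positive_vector[of "comparison_mat A" n] A n \<open>H_matrix A\<close>
    by (auto simp: H_matrix_def comparison_mat_def)
  define X Y where "X = the (mat_inverse M)" and "Y = the (mat_inverse F)"
  note X = mat_inverse_of_invertible[OF M \<open>invertible_mat M\<close>, folded X_def]
  note Y = mat_inverse_of_invertible[OF F \<open>invertible_mat F\<close>, folded Y_def]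
  have TM: "1\<^sub>m n - X * A \<in> carrier_mat n n" and TF: "1\<^sub>m n - Y * A \<in> carrier_mat n n"
    using X(1) Y(1) A by (auto intro!: minus_carrier_mat mult_carrier_mat)
  obtain cM where cM: "0 \<le> cM" "cM < 1" and contraction_M: "weighted_contraction n u cM (1\<^sub>m n - X * A)"
    using splitting_contraction[OF M A TM n mult_one_minus_right_inverse[OF M X(1) A X(2)] assms(8) u Au] .
  obtain cF where cF: "0 \<le> cF" "cF < 1" and contraction_F: "weighted_contraction n u cF (1\<^sub>m n - Y * A)"
    using splitting_contraction[OF F A TF n mult_one_minus_right_inverse[OF F Y(1) A Y(2)] assms(9) u Au] .
  have "weighted_contraction n u (cF * cM) ((1\<^sub>m n - Y * A) * (1\<^sub>m n - X * A))"
    by (rule weighted_contraction_mult[OF TF TM contraction_F contraction_M])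
  then have "rho_real (cabs_mat ((1\<^sub>m n - Y * A) * (1\<^sub>m n - X * A))) \<le> cF * cM"
    using rho_real_cabs_le_of_weighted_contraction[OF mult_carrier_mat[OF TF TM] n, of u] u by blast
  also have "\<dots> < 1" using cF cM mult_left_le_one_le[of cM cF] by linarith
  finally show ?thesis
    unfolding X_def[symmetric] Y_def[symmetric] iteration_mat_factor[OF A M F X(1) Y(1) X(2) Y(3)] .
qed

end
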